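(* Let $q\ge 2$ and $e\ge 0$ be integers. The function $$B_H(n,e)=\frac{q^n}{\sum_{i=0}^e \binom ni (q-1)^i}$$ is log-convex in $n$, i.e. $B_H(n_1,e)B_H(n_2,e)\le B_H(n_1-1,e)B_H(n_2+1,e)$ for all integers $1\le n_1\le n_2$.
   Context: A positive function $f(j)$ of an integer argument is called log-convex if $f(j_1)f(j_2)\le f(j_1-1)f(j_2+1)$ for all $j_1\le j_2$ in the support of $f$. *)

theory Defs
  imports Complex_Main
begin

definition B_H :: "nat \<Rightarrow> nat \<Rightarrow> nat \<Rightarrow> real" where
  "B_H q n e = real q ^ n / (\<Sum>i=0..e. real (n choose i) * (real q - 1) ^ i)"

end

theory Submission
  imports Defs
begin

text \<open>Writing \<open>V\<^sub>e(n)\<close> for the volume of a Hamming ball of radius \<open>e\<close> among the words of length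
  \<open>n\<close> over a \<open>q\<close>-letter alphabet, \<open>B_H(n,e) = q\<^sup>n / V\<^sub>e(n)\<close>, so log-convexity of \<open>B_H\<close> amounts to
  log-concavity of \<open>V\<^sub>e\<close>, i.e. to the growth ratio \<open>V\<^sub>e(n+1)/V\<^sub>e(n)\<close> being decreasing in \<open>n\<close>.
  Pascal's rule gives \<open>V\<^sub>e(n+1)/V\<^sub>e(n) = 1 + (q-1) V\<^sub>e\<^sub>-\<^sub>1(n)/V\<^sub>e(n)\<close>, and
  \<open>V\<^sub>e(n)/V\<^sub>e\<^sub>-\<^sub>1(n) = 1 + binom n e (q-1)\<^sup>e/V\<^sub>e\<^sub>-\<^sub>1(n)\<close> increases with \<open>n\<close> because, term by term,
  \<open>binom (n+1) i / binom n i \<le> binom (n+1) e / binom n e\<close> for \<open>i < e\<close>.\<close>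

definition hamming_ball_volume :: "real \<Rightarrow> nat \<Rightarrow> nat \<Rightarrow> real" where
  "hamming_ball_volume r e n = (\<Sum>i=0..e. real (n choose i) * r ^ i)"

lemma hamming_ball_volume_pos:
  assumes "r \<ge> 0"
  shows "hamming_ball_volume r e n > 0"
proof -
  have "hamming_ball_volume r e n = 1 + (\<Sum>i=1..e. real (n choose i) * r ^ i)"
    unfolding hamming_ball_volume_def by (simp add: sum.atLeast_Suc_atMost)
  moreover have "(\<Sum>i=1..e. real (n choose i) * r ^ i) \<ge> 0"
    using assms by (intro sum_nonneg) auto
  ultimately show ?thesis by linarith
qed

lemma hamming_ball_volume_Suc_radius:
  "hamming_ball_volume r (Suc e) n = hamming_ball_volume r e n + real (n choose Suc e) * r ^ Suc e"
  by (simp add: hamming_ball_volume_def)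

lemma hamming_ball_volume_Suc_length:
  "hamming_ball_volume r (Suc e) (Suc n) = hamming_ball_volume r (Suc e) n + r * hamming_ball_volume r e n"
proof (induction e)
  case 0
  then show ?case by (simp add: hamming_ball_volume_def algebra_simps)
next
  case (Suc e)
  let ?V = "hamming_ball_volume r"
  have "?V (Suc (Suc e)) (Suc n)
      = ?V (Suc e) n + r * ?V e n + real (Suc n choose Suc (Suc e)) * r ^ Suc (Suc e)"
    using Suc by (simp add: hamming_ball_volume_Suc_radius[of r "Suc e"])
  also have "\<dots> = ?V (Suc (Suc e)) n + r * ?V (Suc e) n"
    by (simp add: hamming_ball_volume_Suc_radius algebra_simps)
  finally show ?case .
qed

lemma binomial_Suc_ratio_mono:
  fixes n i e :: nat
  assumes "i < e"
  shows "(Suc n choose i) * (n choose e) \<le> (n choose i) * (Suc n choose e)"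
proof (cases "e \<le> n")
  case False
  then show ?thesis by (simp add: binomial_eq_0)
next
  case True
  \<comment> \<open>Multiplied by the positive \<open>(n+1-i)(n+1-e)\<close>, the claim reduces to \<open>n+1-e \<le> n+1-i\<close>.\<close>
  have absorb: "(Suc n - k) * (Suc n choose k) = Suc n * (n choose k)" for k
    using binomial_absorb_comp[of "Suc n" k] by simp
  have "((Suc n choose i) * (n choose e)) * ((Suc n - i) * (Suc n - e))
      = ((Suc n - i) * (Suc n choose i)) * (n choose e) * (Suc n - e)"
    by (simp only: mult_ac)
  also have "\<dots> = (Suc n * (n choose i)) * (n choose e) * (Suc n - e)"
    by (simp only: absorb)
  also have "\<dots> \<le> (Suc n * (n choose i)) * (n choose e) * (Suc n - i)"
    using assms by (intro mult_left_mono) auto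
  also have "\<dots> = (n choose i) * (Suc n * (n choose e)) * (Suc n - i)"
    by (simp only: mult_ac)
  also have "\<dots> = (n choose i) * ((Suc n - e) * (Suc n choose e)) * (Suc n - i)"
    by (simp only: absorb)
  also have "\<dots> = ((n choose i) * (Suc n choose e)) * ((Suc n - i) * (Suc n - e))"
    by (simp only: mult_ac)
  finally show ?thesis
    using True assms by (simp add: mult_le_cancel2)
qed

lemma hamming_ball_volume_mult_binomial_le:
  assumes "r \<ge> 0"
  shows "hamming_ball_volume r d (Suc n) * real (n choose Suc d)
    \<le> hamming_ball_volume r d n * real (Suc n choose Suc d)"
proof -
  have "hamming_ball_volume r d (Suc n) * real (n choose Suc d)
      = (\<Sum>i=0..d. real ((Suc n choose i) * (n choose Suc d)) * r ^ i)"
    unfolding hamming_ball_volume_def sum_distrib_right by (simp add: algebra_simps)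
  also have "\<dots> \<le> (\<Sum>i=0..d. real ((n choose i) * (Suc n choose Suc d)) * r ^ i)"
    using assms binomial_Suc_ratio_mono[of _ "Suc d" n]
    by (intro sum_mono mult_right_mono) (auto simp only: of_nat_le_iff atLeastAtMost_iff
        le_imp_less_Suc zero_le_power)
  also have "\<dots> = hamming_ball_volume r d n * real (Suc n choose Suc d)"
    unfolding hamming_ball_volume_def sum_distrib_right by (simp add: algebra_simps)
  finally show ?thesis .
qed

lemma hamming_ball_volume_radius_ratio_mono:
  assumes "r \<ge> 0"
  shows "hamming_ball_volume r d (Suc n) * hamming_ball_volume r (Suc d) n
    \<le> hamming_ball_volume r d n * hamming_ball_volume r (Suc d) (Suc n)"
proof -
  have "hamming_ball_volume r d (Suc n) * real (n choose Suc d) * r ^ Suc d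
      \<le> hamming_ball_volume r d n * real (Suc n choose Suc d) * r ^ Suc d"
    using hamming_ball_volume_mult_binomial_le[OF assms] assms by (simp add: mult_right_mono)
  then show ?thesis
    by (simp add: hamming_ball_volume_Suc_radius algebra_simps)
qed

lemma hamming_ball_volume_growth_decseq:
  assumes "r \<ge> 0"
  shows "decseq (\<lambda>n. hamming_ball_volume r e (Suc n) / hamming_ball_volume r e n)"
proof (cases e)
  case 0
  then show ?thesis by (simp add: hamming_ball_volume_def decseq_def)
next
  case (Suc d)
  let ?V = "hamming_ball_volume r"
  have pos: "?V k m > 0" for k m
    using hamming_ball_volume_pos[OF assms] .
  have growth: "?V (Suc d) (Suc m) / ?V (Suc d) m = 1 + r * (?V d m / ?V (Suc d) m)" for m
    using pos[of "Suc d" m] by (simp add: hamming_ball_volume_Suc_length field_simps)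
  have "?V d (Suc m) / ?V (Suc d) (Suc m) \<le> ?V d m / ?V (Suc d) m" for m
    using hamming_ball_volume_radius_ratio_mono[OF assms, of d m] pos
    by (simp add: divide_simps)
  then have "r * (?V d (Suc m) / ?V (Suc d) (Suc m)) \<le> r * (?V d m / ?V (Suc d) m)" for m
    using assms by (rule mult_left_mono)
  then show ?thesis
    unfolding Suc by (intro decseq_SucI) (simp only: growth add_left_mono)
qed

lemma hamming_ball_volume_log_concave:
  assumes "r \<ge> 0" and "m \<le> n"
  shows "hamming_ball_volume r e m * hamming_ball_volume r e (Suc n)
    \<le> hamming_ball_volume r e (Suc m) * hamming_ball_volume r e n"
proof -
  have "hamming_ball_volume r e (Suc n) / hamming_ball_volume r e n
      \<le> hamming_ball_volume r e (Suc m) / hamming_ball_volume r e m"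
    using decseqD[OF hamming_ball_volume_growth_decseq[OF assms(1)] assms(2)] .
  then show ?thesis
    using hamming_ball_volume_pos[OF assms(1), of e] by (simp add: divide_simps mult.commute)
qed

theorem lemma1:
  fixes q e n1 n2 :: nat
  assumes "q \<ge> 2" and "1 \<le> n1" and "n1 \<le> n2"
  shows "B_H q n1 e * B_H q n2 e \<le> B_H q (n1 - 1) e * B_H q (n2 + 1) e"
proof -
  define V where "V = hamming_ball_volume (real q - 1) e"
  have r: "real q - 1 \<ge> 0" using assms(1) by simp
  have B_H_eq: "B_H q n e = real q ^ n / V n" for n
    by (simp add: B_H_def V_def hamming_ball_volume_def)
  have V_pos: "V n > 0" for n
    unfolding V_def using hamming_ball_volume_pos[OF r] .
  obtain m where m: "n1 = Suc m" using assms(2) by (cases n1) auto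
  have "V m * V (Suc n2) \<le> V (Suc m) * V n2"
    unfolding V_def using hamming_ball_volume_log_concave[OF r] assms(3) m by simp
  then have "real q ^ Suc (m + n2) * (V m * V (Suc n2)) \<le> real q ^ Suc (m + n2) * (V (Suc m) * V n2)"
    by (simp add: mult_left_mono)
  then show ?thesis
    unfolding B_H_eq m using V_pos by (simp add: divide_simps power_add algebra_simps)
qed

end
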